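(* Let $G$ be a graph with vertex set $V$ and let $\mu$ be any probability distribution over subsets of $V$. Let $H_\mu$ be the graph on $V$ with edge weights $H_\mu(u,v)=\Pr_{S\sim\mu}[u,v\in S]$. Then $$\mathsf{inter}_G(H_\mu)\ge\mathbb E_{S\sim\mu,\,S'\sim\mu}\left[\mathsf{inter}_G(K_{|S\cap S'|})\right],$$ where $S,S'$ are independent and $K_m$ denotes the unit-weighted complete graph on $m$ vertices.
   Context: $\mathcal P_{uv}$ is the set of paths in $G$ between $u,v$. A flow is $F:\bigcup\mathcal P_{uv}\to[0,\infty)$ with $F[u,v]=\sum_{p\in\mathcal P_{uv}}F(p)$. $\mathsf{inter}(F)=\sum_{(u,v,u',v'):|\{u,v,u',v'\}|=4}\sum_{p\in\mathcal P_{uv},p'\in\mathcal P_{u'v'}}\sum_{x\in p\cap p'}F(p)F(p')$. For a graph $H$ with edge weights $w$, an $H$-flow in $G$ is a flow $F$ with an injective $\phi:V(H)\to V$ such that $F[\phi(u),\phi(v)]\ge w(u,v)$ for every edge $\{u,v\}$ of $H$; unit-weighted means all weights are $1$. $\mathsf{inter}_G(H)$ is the minimum of $\mathsf{inter}(F)$ over $H$-flows $F$ in $G$. *)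

theory Defs
  imports "HOL-Probability.Probability"
begin

definition graph :: "'a set \<Rightarrow> ('a \<Rightarrow> 'a \<Rightarrow> bool) \<Rightarrow> bool" where
  "graph V E \<longleftrightarrow> finite V \<and> (\<forall>x y. E x y \<longrightarrow> E y x) \<and> (\<forall>x. \<not> E x x)"

definition is_path :: "'a set \<Rightarrow> ('a \<Rightarrow> 'a \<Rightarrow> bool) \<Rightarrow> 'a list \<Rightarrow> 'a \<Rightarrow> 'a \<Rightarrow> bool" where
  "is_path V E p u v \<longleftrightarrow> p \<noteq> [] \<and> distinct p \<and> set p \<subseteq> V \<and> hd p = u \<and> last p = v \<and>
     (\<forall>i. Suc i < length p \<longrightarrow> E (p ! i) (p ! Suc i))"

definition paths :: "'a set \<Rightarrow> ('a \<Rightarrow> 'a \<Rightarrow> bool) \<Rightarrow> 'a \<Rightarrow> 'a \<Rightarrow> 'a list set" where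
  "paths V E u v = {p. is_path V E p u v}"

text \<open>A flow assigns a nonnegative weight to every path. Paths are undirected objects,
  so a path and its reversal (the same path, read from the other end) get the same value.\<close>
definition is_flow :: "('a list \<Rightarrow> real) \<Rightarrow> bool" where
  "is_flow F \<longleftrightarrow> (\<forall>p. 0 \<le> F p) \<and> (\<forall>p. F (rev p) = F p)"

definition flow_val :: "'a set \<Rightarrow> ('a \<Rightarrow> 'a \<Rightarrow> bool) \<Rightarrow> ('a list \<Rightarrow> real) \<Rightarrow> 'a \<Rightarrow> 'a \<Rightarrow> real" where
  "flow_val V E F u v = (\<Sum>p\<in>paths V E u v. F p)"

definition inter :: "'a set \<Rightarrow> ('a \<Rightarrow> 'a \<Rightarrow> bool) \<Rightarrow> ('a list \<Rightarrow> real) \<Rightarrow> real" where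
  "inter V E F =
     (\<Sum>(u, v, u', v') \<in> {(u, v, u', v'). u \<in> V \<and> v \<in> V \<and> u' \<in> V \<and> v' \<in> V \<and> card {u, v, u', v'} = 4}.
        \<Sum>p\<in>paths V E u v. \<Sum>p'\<in>paths V E u' v'.
          real (card (set p \<inter> set p')) * F p * F p')"

text \<open>An H-flow in G, for a weighted graph H on vertex set W with weights w
  (edges of H = pairs of distinct vertices; a weight 0 imposes no constraint).\<close>
definition H_flow :: "'a set \<Rightarrow> ('a \<Rightarrow> 'a \<Rightarrow> bool) \<Rightarrow> 'b set \<Rightarrow> ('b \<Rightarrow> 'b \<Rightarrow> real)
    \<Rightarrow> ('a list \<Rightarrow> real) \<Rightarrow> ('b \<Rightarrow> 'a) \<Rightarrow> bool" where
  "H_flow V E W w F \<phi> \<longleftrightarrow> is_flow F \<and> inj_on \<phi> W \<and> \<phi> ` W \<subseteq> V \<and>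
     (\<forall>a\<in>W. \<forall>b\<in>W. a \<noteq> b \<longrightarrow> w a b \<le> flow_val V E F (\<phi> a) (\<phi> b))"

text \<open>inter_G(H): the minimum (infimum; +\<infinity> if no H-flow exists) of inter(F) over H-flows.\<close>
definition inter_G :: "'a set \<Rightarrow> ('a \<Rightarrow> 'a \<Rightarrow> bool) \<Rightarrow> 'b set \<Rightarrow> ('b \<Rightarrow> 'b \<Rightarrow> real) \<Rightarrow> ereal" where
  "inter_G V E W w = Inf {ereal (inter V E F) | F \<phi>. H_flow V E W w F \<phi>}"

definition K_vertices :: "nat \<Rightarrow> nat set" where "K_vertices m = {..<m}"
definition K_weight :: "nat \<Rightarrow> nat \<Rightarrow> real" where "K_weight a b = 1"

end

theory Submission
  imports Defs
begin

text \<open>Given an \<open>H\<^sub>\<mu>\<close>-flow \<open>F\<close> and samples \<open>S, S'\<close>, keep only the paths between images of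
  \<open>T = S \<inter> S'\<close> and divide each by its demand \<open>H\<^sub>\<mu>(u,v)\<close>; this is a \<open>K\<^sub>|\<^sub>T\<^sub>|\<close>-flow.
  The intersection of two paths is counted with the product of their two scaling factors,
  whose expectation over independent \<open>S, S'\<close> is
  \<open>Pr[u,v,u',v' \<in> S]\<^sup>2 / (H\<^sub>\<mu>(u,v) H\<^sub>\<mu>(u',v')) \<le> 1\<close>; hence the expected value of
  \<open>inter\<close> of the rescaled flows is at most \<open>inter(F)\<close>.\<close>

definition pair_prob :: "'a set pmf \<Rightarrow> 'a \<Rightarrow> 'a \<Rightarrow> real" where
  "pair_prob \<mu> a b = measure_pmf.prob \<mu> {S. a \<in> S \<and> b \<in> S}"

text \<open>\<open>\<psi>\<close> pulls vertices of \<open>G\<close> back to \<open>H\<close>; it is instantiated with an inverse of the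
  embedding of an \<open>H\<close>-flow.\<close>

definition inverse_demand :: "('b \<Rightarrow> 'b \<Rightarrow> real) \<Rightarrow> ('a \<Rightarrow> 'b) \<Rightarrow> 'b set \<Rightarrow> 'a \<Rightarrow> 'a \<Rightarrow> real" where
  "inverse_demand w \<psi> T x y =
     (if \<psi> x \<in> T \<and> \<psi> y \<in> T \<and> 0 < w (\<psi> x) (\<psi> y) then 1 / w (\<psi> x) (\<psi> y) else 0)"

definition rescaled_flow ::
    "('b \<Rightarrow> 'b \<Rightarrow> real) \<Rightarrow> ('a \<Rightarrow> 'b) \<Rightarrow> 'b set \<Rightarrow> ('a list \<Rightarrow> real) \<Rightarrow> 'a list \<Rightarrow> real" where
  "rescaled_flow w \<psi> T F p = F p * inverse_demand w \<psi> T (hd p) (last p)"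

lemma pair_prob_commute: "pair_prob \<mu> a b = pair_prob \<mu> b a"
  unfolding pair_prob_def by (metis (mono_tags, lifting) Collect_cong)

lemma pmf_le_pair_prob: "a \<in> S \<Longrightarrow> b \<in> S \<Longrightarrow> pmf \<mu> S \<le> pair_prob \<mu> a b"
  unfolding pair_prob_def measure_pmf_single[symmetric]
  by (rule measure_pmf.finite_measure_mono) auto

lemma measure_pmf_prob_eq_sum:
  assumes "finite X" "set_pmf \<mu> \<subseteq> X"
  shows "measure_pmf.prob \<mu> A = (\<Sum>x\<in>X. pmf \<mu> x * indicator A x)"
  using integral_measure_pmf_real[of X \<mu> "indicator A"] assms
  by (auto simp: mult.commute)

lemma expected_inverse_demand_product_le_1:
  assumes "finite X" "set_pmf \<mu> \<subseteq> X"
  shows "(\<Sum>S\<in>X. \<Sum>S'\<in>X. pmf \<mu> S * pmf \<mu> S' *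
            (inverse_demand (pair_prob \<mu>) \<psi> (S \<inter> S') x y *
             inverse_demand (pair_prob \<mu>) \<psi> (S \<inter> S') x' y')) \<le> 1"
    (is "?expectation \<le> 1")
proof (cases "0 < pair_prob \<mu> (\<psi> x) (\<psi> y) \<and> 0 < pair_prob \<mu> (\<psi> x') (\<psi> y')")
  case False
  then have vanish:
    "inverse_demand (pair_prob \<mu>) \<psi> T x y * inverse_demand (pair_prob \<mu>) \<psi> T x' y' = 0" for T
    by (auto simp: inverse_demand_def)
  show ?thesis unfolding vanish by simp
next
  case True
  define P where "P = pair_prob \<mu> (\<psi> x) (\<psi> y)"
  define P' where "P' = pair_prob \<mu> (\<psi> x') (\<psi> y')"
  define Q where "Q = {\<psi> x, \<psi> y, \<psi> x', \<psi> y'}"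
  define R where "R = measure_pmf.prob \<mu> {S. Q \<subseteq> S}"
  have pos: "0 < P" "0 < P'" using True by (auto simp: P_def P'_def)
  have "?expectation = (\<Sum>S\<in>X. \<Sum>S'\<in>X.
      (pmf \<mu> S * indicator {S. Q \<subseteq> S} S) * (pmf \<mu> S' * indicator {S. Q \<subseteq> S} S') / (P * P'))"
    using True by (intro sum.cong refl) (auto simp: inverse_demand_def Q_def P_def P'_def)
  also have "\<dots> = R * R / (P * P')"
    unfolding R_def measure_pmf_prob_eq_sum[OF assms]
    by (simp add: sum_product sum_divide_distrib)
  also have "\<dots> \<le> 1"
  proof -
    have "R \<le> P" "R \<le> P'"
      unfolding R_def P_def P'_def pair_prob_def
      by (rule measure_pmf.finite_measure_mono; auto simp: Q_def)+
    then have "R * R \<le> P * P'" using pos by (intro mult_mono) (auto simp: R_def)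
    then show ?thesis using pos by simp
  qed
  finally show ?thesis .
qed

lemma sum_sum_mult_sum_commute:
  fixes a :: "'x \<Rightarrow> 'y \<Rightarrow> real"
  shows "(\<Sum>x\<in>A. \<Sum>y\<in>B. a x y * (\<Sum>t\<in>C. g x y t)) = (\<Sum>t\<in>C. \<Sum>x\<in>A. \<Sum>y\<in>B. a x y * g x y t)"
  by (simp add: sum_distrib_left sum.swap[of _ _ C] sum.swap[of _ B])

lemma sum_sum_mult_sum_sum_commute:
  fixes a :: "'x \<Rightarrow> 'y \<Rightarrow> real"
  shows "(\<Sum>x\<in>A. \<Sum>y\<in>B. a x y * (\<Sum>p\<in>P. \<Sum>q\<in>Q. f p q * g x y))
       = (\<Sum>p\<in>P. \<Sum>q\<in>Q. f p q * (\<Sum>x\<in>A. \<Sum>y\<in>B. a x y * g x y))"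
proof -
  have "(\<Sum>x\<in>A. \<Sum>y\<in>B. a x y * (\<Sum>p\<in>P. \<Sum>q\<in>Q. f p q * g x y))
      = (\<Sum>p\<in>P. \<Sum>q\<in>Q. \<Sum>x\<in>A. \<Sum>y\<in>B. a x y * (f p q * g x y))"
    unfolding sum_sum_mult_sum_commute by (intro sum.cong refl sum_sum_mult_sum_commute)
  then show ?thesis by (simp add: sum_distrib_left mult.left_commute)
qed

lemma inter_endpoint_scaling:
  "inter V E (\<lambda>p. F p * h (hd p) (last p)) =
   (\<Sum>(u, v, u', v') \<in> {(u, v, u', v'). u \<in> V \<and> v \<in> V \<and> u' \<in> V \<and> v' \<in> V \<and> card {u, v, u', v'} = 4}.
      \<Sum>p\<in>paths V E u v. \<Sum>p'\<in>paths V E u' v'.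
        real (card (set p \<inter> set p')) * F p * F p' * (h u v * h u' v'))"
  unfolding inter_def
  by (intro sum.cong refl) (auto simp: paths_def is_path_def mult_ac)

lemma averaged_endpoint_scaling_inter_le:
  fixes a :: "'x \<Rightarrow> 'y \<Rightarrow> real"
  assumes F_nonneg: "\<And>p. 0 \<le> F p"
    and scaling: "\<And>u v u' v'. (\<Sum>x\<in>A. \<Sum>y\<in>B. a x y * (h x y u v * h x y u' v')) \<le> 1"
  shows "(\<Sum>x\<in>A. \<Sum>y\<in>B. a x y * inter V E (\<lambda>p. F p * h x y (hd p) (last p))) \<le> inter V E F"
proof -
  let ?quadruples = "{(u, v, u', v'). u \<in> V \<and> v \<in> V \<and> u' \<in> V \<and> v' \<in> V \<and> card {u, v, u', v'} = 4}"
  let ?c = "\<lambda>p p'. real (card (set p \<inter> set p')) * F p * F p'"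
  have "(\<Sum>x\<in>A. \<Sum>y\<in>B. a x y * inter V E (\<lambda>p. F p * h x y (hd p) (last p)))
      = (\<Sum>t\<in>?quadruples. \<Sum>x\<in>A. \<Sum>y\<in>B. a x y * (case t of (u, v, u', v') \<Rightarrow>
           \<Sum>p\<in>paths V E u v. \<Sum>p'\<in>paths V E u' v'. ?c p p' * (h x y u v * h x y u' v')))"
    unfolding inter_endpoint_scaling by (rule sum_sum_mult_sum_commute)
  also have "\<dots> = (\<Sum>t\<in>?quadruples. case t of (u, v, u', v') \<Rightarrow>
      \<Sum>p\<in>paths V E u v. \<Sum>p'\<in>paths V E u' v'.
        ?c p p' * (\<Sum>x\<in>A. \<Sum>y\<in>B. a x y * (h x y u v * h x y u' v')))"
    by (intro sum.cong refl) (auto simp: sum_sum_mult_sum_sum_commute)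
  also have "\<dots> \<le> (\<Sum>t\<in>?quadruples. case t of (u, v, u', v') \<Rightarrow>
      \<Sum>p\<in>paths V E u v. \<Sum>p'\<in>paths V E u' v'. ?c p p' * 1)"
    using F_nonneg by (intro sum_mono) (auto intro!: sum_mono mult_left_mono scaling simp del: mult_1_right)
  also have "\<dots> = inter V E F"
    by (simp add: inter_def)
  finally show ?thesis .
qed

lemma expected_inter_rescaled_flow_le:
  assumes "finite X" "set_pmf \<mu> \<subseteq> X" "is_flow F"
  shows "(\<Sum>S\<in>X. \<Sum>S'\<in>X. pmf \<mu> S * pmf \<mu> S' *
           inter V E (rescaled_flow (pair_prob \<mu>) \<psi> (S \<inter> S') F)) \<le> inter V E F"
  unfolding rescaled_flow_def
proof (rule averaged_endpoint_scaling_inter_le)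
  show "0 \<le> F p" for p
    using assms(3) by (simp add: is_flow_def)
  show "(\<Sum>S\<in>X. \<Sum>S'\<in>X. pmf \<mu> S * pmf \<mu> S' *
      (inverse_demand (pair_prob \<mu>) \<psi> (S \<inter> S') u v *
       inverse_demand (pair_prob \<mu>) \<psi> (S \<inter> S') u' v')) \<le> 1" for u v u' v'
    using assms(1,2) by (rule expected_inverse_demand_product_le_1)
qed

lemma inverse_demand_commute:
  "(\<And>a b. w a b = w b a) \<Longrightarrow> inverse_demand w \<psi> T x y = inverse_demand w \<psi> T y x"
  unfolding inverse_demand_def by metis

lemma is_flow_rescaled_flow:
  assumes "is_flow F" "\<And>a b. w a b = w b a"
  shows "is_flow (rescaled_flow w \<psi> T F)"
  unfolding is_flow_def rescaled_flow_def
proof (intro conjI allI)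
  fix p
  show "0 \<le> F p * inverse_demand w \<psi> T (hd p) (last p)"
    using assms(1) by (simp add: is_flow_def inverse_demand_def)
  show "F (rev p) * inverse_demand w \<psi> T (hd (rev p)) (last (rev p))
      = F p * inverse_demand w \<psi> T (hd p) (last p)"
    using assms by (cases "p = []") (auto simp: is_flow_def hd_rev last_rev inverse_demand_commute)
qed

lemma flow_val_rescaled_flow:
  "flow_val V E (rescaled_flow w \<psi> T F) x y = flow_val V E F x y * inverse_demand w \<psi> T x y"
  unfolding flow_val_def rescaled_flow_def sum_distrib_right
  by (intro sum.cong refl) (auto simp: paths_def is_path_def)

lemma rescaled_flow_is_complete_graph_flow:
  assumes H: "H_flow V E W w F \<phi>"
    and w_commute: "\<And>a b. w a b = w b a"
    and T: "T \<subseteq> W" "finite T"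
    and w_pos: "\<And>a b. a \<in> T \<Longrightarrow> b \<in> T \<Longrightarrow> a \<noteq> b \<Longrightarrow> 0 < w a b"
  shows "\<exists>\<phi>'. H_flow V E (K_vertices (card T)) K_weight (rescaled_flow w (inv_into W \<phi>) T F) \<phi>'"
proof -
  have flow: "is_flow F" and inj: "inj_on \<phi> W" and img: "\<phi> ` W \<subseteq> V"
    and demand: "\<And>a b. a \<in> W \<Longrightarrow> b \<in> W \<Longrightarrow> a \<noteq> b \<Longrightarrow> w a b \<le> flow_val V E F (\<phi> a) (\<phi> b)"
    using H by (auto simp: H_flow_def)
  obtain \<beta> where \<beta>: "bij_betw \<beta> (K_vertices (card T)) T"
    using ex_bij_betw_nat_finite[OF T(2)] by (auto simp: K_vertices_def atLeast0LessThan)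
  have "H_flow V E (K_vertices (card T)) K_weight (rescaled_flow w (inv_into W \<phi>) T F) (\<phi> \<circ> \<beta>)"
    unfolding H_flow_def
  proof (intro conjI ballI impI)
    show "is_flow (rescaled_flow w (inv_into W \<phi>) T F)"
      using flow w_commute by (rule is_flow_rescaled_flow)
    show "inj_on (\<phi> \<circ> \<beta>) (K_vertices (card T))"
      using \<beta> inj_on_subset[OF inj T(1)] by (auto simp: bij_betw_def intro: comp_inj_on)
    show "(\<phi> \<circ> \<beta>) ` K_vertices (card T) \<subseteq> V"
      using \<beta> img T(1) by (force simp: bij_betw_def)
    fix i j
    assume "i \<in> K_vertices (card T)" "j \<in> K_vertices (card T)" "i \<noteq> j"
    then have ab: "\<beta> i \<in> T" "\<beta> j \<in> T" "\<beta> i \<noteq> \<beta> j"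
      using \<beta> by (auto simp: bij_betw_def inj_on_def)
    then have pos: "0 < w (\<beta> i) (\<beta> j)" using w_pos by blast
    have "w (\<beta> i) (\<beta> j) \<le> flow_val V E F (\<phi> (\<beta> i)) (\<phi> (\<beta> j))"
      using ab demand T(1) by blast
    moreover have "inverse_demand w (inv_into W \<phi>) T (\<phi> (\<beta> i)) (\<phi> (\<beta> j)) = 1 / w (\<beta> i) (\<beta> j)"
      using ab pos inj T(1) by (auto simp: inverse_demand_def inv_into_f_f subsetD)
    ultimately show "K_weight i j \<le> flow_val V E (rescaled_flow w (inv_into W \<phi>) T F) ((\<phi> \<circ> \<beta>) i) ((\<phi> \<circ> \<beta>) j)"
      using pos by (simp add: K_weight_def flow_val_rescaled_flow)
  qed
  then show ?thesis by blast
qed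

lemma inter_G_le_inter: "H_flow V E W w F \<phi> \<Longrightarrow> inter_G V E W w \<le> ereal (inter V E F)"
  unfolding inter_G_def by (auto intro: Inf_lower)

lemma inter_G_complete_le_rescaled_flow:
  assumes H: "H_flow V E W (pair_prob \<mu>) F \<phi>" and "S \<subseteq> W" "finite S" "0 < pmf \<mu> S"
  shows "inter_G V E (K_vertices (card (S \<inter> S'))) K_weight
           \<le> ereal (inter V E (rescaled_flow (pair_prob \<mu>) (inv_into W \<phi>) (S \<inter> S') F))"
proof -
  have "0 < pair_prob \<mu> a b" if "a \<in> S \<inter> S'" "b \<in> S \<inter> S'" for a b
    using pmf_le_pair_prob[of a S b \<mu>] that \<open>0 < pmf \<mu> S\<close> by (meson IntD1 less_le_trans)
  moreover have "S \<inter> S' \<subseteq> W" "finite (S \<inter> S')"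
    using \<open>S \<subseteq> W\<close> \<open>finite S\<close> by auto
  ultimately obtain \<phi>' where
    "H_flow V E (K_vertices (card (S \<inter> S'))) K_weight
       (rescaled_flow (pair_prob \<mu>) (inv_into W \<phi>) (S \<inter> S') F) \<phi>'"
    using rescaled_flow_is_complete_graph_flow[OF H pair_prob_commute] by blast
  then show ?thesis by (rule inter_G_le_inter)
qed

theorem lemma3p7:
  fixes V :: "'a set" and E :: "'a \<Rightarrow> 'a \<Rightarrow> bool" and \<mu> :: "'a set pmf"
  assumes "graph V E"
    and "set_pmf \<mu> \<subseteq> Pow V"
  shows "inter_G V E V (\<lambda>u v. measure_pmf.prob \<mu> {S. u \<in> S \<and> v \<in> S})
         \<ge> (\<Sum>S\<in>Pow V. \<Sum>S'\<in>Pow V.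
               ereal (pmf \<mu> S * pmf \<mu> S') * inter_G V E (K_vertices (card (S \<inter> S'))) K_weight)"
proof -
  have "finite V" using assms(1) by (simp add: graph_def)
  have "(\<Sum>S\<in>Pow V. \<Sum>S'\<in>Pow V.
          ereal (pmf \<mu> S * pmf \<mu> S') * inter_G V E (K_vertices (card (S \<inter> S'))) K_weight)
        \<le> ereal (inter V E F)" if H: "H_flow V E V (pair_prob \<mu>) F \<phi>" for F \<phi>
  proof -
    let ?F = "\<lambda>T. rescaled_flow (pair_prob \<mu>) (inv_into V \<phi>) T F"
    have "ereal (pmf \<mu> S * pmf \<mu> S') * inter_G V E (K_vertices (card (S \<inter> S'))) K_weight
        \<le> ereal (pmf \<mu> S * pmf \<mu> S' * inter V E (?F (S \<inter> S')))" if "S \<subseteq> V" for S S'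
      using inter_G_complete_le_rescaled_flow[OF H \<open>S \<subseteq> V\<close> finite_subset[OF \<open>S \<subseteq> V\<close> \<open>finite V\<close>]]
      by (cases "pmf \<mu> S = 0")
        (simp_all add: order_less_le ereal_mult_left_mono zero_ereal_def [symmetric]
           flip: times_ereal.simps(1))
    then have "(\<Sum>S\<in>Pow V. \<Sum>S'\<in>Pow V.
          ereal (pmf \<mu> S * pmf \<mu> S') * inter_G V E (K_vertices (card (S \<inter> S'))) K_weight)
        \<le> ereal (\<Sum>S\<in>Pow V. \<Sum>S'\<in>Pow V. pmf \<mu> S * pmf \<mu> S' * inter V E (?F (S \<inter> S')))"
      unfolding sum_ereal[symmetric] by (intro sum_mono) auto
    also have "\<dots> \<le> ereal (inter V E F)"
      using H \<open>finite V\<close> by (simp add: H_flow_def expected_inter_rescaled_flow_le[OF _ assms(2)])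
    finally show ?thesis .
  qed
  moreover have "(\<lambda>u v. measure_pmf.prob \<mu> {S. u \<in> S \<and> v \<in> S}) = pair_prob \<mu>"
    by (simp add: pair_prob_def fun_eq_iff)
  ultimately show ?thesis
    unfolding inter_G_def by (auto intro: Inf_greatest)
qed

end
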